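(* An orthogonal projection need not satisfy the property $\mathcal{AN}^*$: there exist a complex Hilbert space $H$ (e.g. $H = \ell^2$) and an orthogonal projection $P \in \mathcal{L}(H)$ that does not satisfy the property $\mathcal{AN}^*$.
   Context: $\mathcal{L}(H)$ is the space of bounded linear operators on $H$. For a closed subspace $M \neq \{0\}$ of $H$ and $T \in \mathcal{L}(H)$, write $[T|_M] := \inf\{\|Tx\| : x \in M, \|x\|=1\}$; $T|_M$ satisfies the property $\mathcal{N}^*$ if there exists $x_0 \in M$ with $\|x_0\| = 1$ and $\|Tx_0\| = [T|_M]$. $T$ satisfies the property $\mathcal{AN}^*$ if for every closed subspace $M \neq \{0\}$ of $H$, $T|_M$ satisfies $\mathcal{N}^*$. *)

theory Defs
  imports "HOL-Analysis.Analysis"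
begin

definition l2 :: "(nat \<Rightarrow> complex) set" where
  "l2 = {x. summable (\<lambda>n. (cmod (x n))\<^sup>2)}"

definition l2_norm :: "(nat \<Rightarrow> complex) \<Rightarrow> real" where
  "l2_norm x = sqrt (\<Sum>n. (cmod (x n))\<^sup>2)"

definition l2_inner :: "(nat \<Rightarrow> complex) \<Rightarrow> (nat \<Rightarrow> complex) \<Rightarrow> complex" where
  "l2_inner x y = (\<Sum>n. x n * cnj (y n))"

definition bounded_op :: "((nat \<Rightarrow> complex) \<Rightarrow> (nat \<Rightarrow> complex)) \<Rightarrow> bool" where
  "bounded_op T \<longleftrightarrow>
     (\<forall>x\<in>l2. T x \<in> l2) \<and>
     (\<forall>x\<in>l2. \<forall>y\<in>l2. \<forall>a::complex. T (\<lambda>n. a * x n + y n) = (\<lambda>n. a * T x n + T y n)) \<and>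
     (\<exists>C. \<forall>x\<in>l2. l2_norm (T x) \<le> C * l2_norm x)"

definition orth_proj :: "((nat \<Rightarrow> complex) \<Rightarrow> (nat \<Rightarrow> complex)) \<Rightarrow> bool" where
  "orth_proj P \<longleftrightarrow> bounded_op P \<and>
     (\<forall>x\<in>l2. P (P x) = P x) \<and>
     (\<forall>x\<in>l2. \<forall>y\<in>l2. l2_inner (P x) y = l2_inner x (P y))"

definition closed_subspace :: "(nat \<Rightarrow> complex) set \<Rightarrow> bool" where
  "closed_subspace M \<longleftrightarrow> M \<subseteq> l2 \<and> (\<lambda>n. 0) \<in> M \<and>
     (\<forall>x\<in>M. \<forall>y\<in>M. \<forall>a::complex. (\<lambda>n. a * x n + y n) \<in> M) \<and>
     (\<forall>s x. (\<forall>k. s k \<in> M) \<and> x \<in> l2 \<and>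
            ((\<lambda>k. l2_norm (\<lambda>n. s k n - x n)) \<longlonglongrightarrow> 0) \<longrightarrow> x \<in> M)"

definition restr_inf :: "((nat \<Rightarrow> complex) \<Rightarrow> (nat \<Rightarrow> complex)) \<Rightarrow> (nat \<Rightarrow> complex) set \<Rightarrow> real" where
  "restr_inf T M = Inf {l2_norm (T x) | x. x \<in> M \<and> l2_norm x = 1}"

definition N_star :: "((nat \<Rightarrow> complex) \<Rightarrow> (nat \<Rightarrow> complex)) \<Rightarrow> (nat \<Rightarrow> complex) set \<Rightarrow> bool" where
  "N_star T M \<longleftrightarrow> (\<exists>x0\<in>M. l2_norm x0 = 1 \<and> l2_norm (T x0) = restr_inf T M)"

definition AN_star :: "((nat \<Rightarrow> complex) \<Rightarrow> (nat \<Rightarrow> complex)) \<Rightarrow> bool" where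
  "AN_star T \<longleftrightarrow> (\<forall>M. closed_subspace M \<and> M \<noteq> {\<lambda>n. 0} \<longrightarrow> N_star T M)"

end

theory Submission
  imports Defs
begin

text \<open>Let P be the projection onto the odd coordinates and M the closed subspace of all x with
  x(2j+1) = x(2j) / (j+1). The unit vector of M supported on the coordinates 2k, 2k+1 is mapped
  by P to a vector of norm at most 1/(k+1), so [P|M] = 0. But P x = 0 kills the odd coordinates
  of x in M and hence, through the defining relation, the even ones as well: the infimum is not
  attained.\<close>

lemma cmod_lin_comb_sq_le:
  "(cmod (a * x + y))\<^sup>2 \<le> 2 * (cmod a)\<^sup>2 * (cmod x)\<^sup>2 + 2 * (cmod y)\<^sup>2"
proof -
  have "cmod (a * x + y) \<le> cmod a * cmod x + cmod y"
    by (metis norm_mult norm_triangle_ineq)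
  hence "(cmod (a * x + y))\<^sup>2 \<le> (cmod a * cmod x + cmod y)\<^sup>2"
    by (simp add: power_mono)
  also have "\<dots> \<le> 2 * (cmod a)\<^sup>2 * (cmod x)\<^sup>2 + 2 * (cmod y)\<^sup>2"
    using zero_le_power2[of "cmod a * cmod x - cmod y"]
    by (simp add: power2_eq_square algebra_simps)
  finally show ?thesis .
qed

lemma l2_lin_comb:
  assumes "x \<in> l2" "y \<in> l2"
  shows "(\<lambda>n. a * x n + y n) \<in> l2"
proof -
  have bound: "summable (\<lambda>n. 2 * (cmod a)\<^sup>2 * (cmod (x n))\<^sup>2 + 2 * (cmod (y n))\<^sup>2)"
    using assms by (intro summable_add summable_mult) (auto simp: l2_def)
  show ?thesis unfolding l2_def
    by (intro CollectI summable_comparison_test[OF _ bound])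
       (auto intro!: exI[of _ 0] cmod_lin_comb_sq_le)
qed

lemma l2_diff: "x \<in> l2 \<Longrightarrow> y \<in> l2 \<Longrightarrow> (\<lambda>n. x n - y n) \<in> l2"
  using l2_lin_comb[of y x "-1"] by simp

lemma l2_norm_nonneg: "x \<in> l2 \<Longrightarrow> 0 \<le> l2_norm x"
  unfolding l2_norm_def l2_def by (auto intro!: suminf_nonneg)

lemma l2_norm_zero [simp]: "l2_norm (\<lambda>n. 0) = 0"
  by (simp add: l2_norm_def)

lemma l2_norm_eq_0_iff:
  assumes "x \<in> l2"
  shows "l2_norm x = 0 \<longleftrightarrow> x = (\<lambda>n. 0)"
proof -
  have "summable (\<lambda>n. (cmod (x n))\<^sup>2)" using assms by (simp add: l2_def)
  hence "(\<Sum>n. (cmod (x n))\<^sup>2) = 0 \<longleftrightarrow> (\<forall>n. x n = 0)"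
    by (simp add: suminf_eq_zero_iff)
  thus ?thesis by (simp add: l2_norm_def fun_eq_iff)
qed

lemma norm_le_l2_norm:
  assumes "x \<in> l2"
  shows "cmod (x n) \<le> l2_norm x"
proof -
  have "(\<Sum>i\<in>{n}. (cmod (x i))\<^sup>2) \<le> (\<Sum>i. (cmod (x i))\<^sup>2)"
    using assms by (intro sum_le_suminf) (auto simp: l2_def)
  thus ?thesis unfolding l2_norm_def by (simp add: real_le_rsqrt)
qed

lemma l2_tendsto_coordinate:
  assumes "\<And>k. s k \<in> l2" "x \<in> l2" "(\<lambda>k. l2_norm (\<lambda>n. s k n - x n)) \<longlonglongrightarrow> 0"
  shows "(\<lambda>k. s k n) \<longlonglongrightarrow> x n"
proof -
  have "(\<lambda>k. s k n - x n) \<longlonglongrightarrow> 0"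
    using assms norm_le_l2_norm[OF l2_diff]
    by (intro Lim_null_comparison[OF _ assms(3)]) auto
  thus ?thesis by (simp add: LIM_zero_iff)
qed

lemma restr_inf_eq_0:
  assumes "\<forall>x\<in>M. T x \<in> l2"
    and "\<And>k::nat. \<exists>x\<in>M. l2_norm x = 1 \<and> l2_norm (T x) \<le> 1 / (real k + 1)"
  shows "restr_inf T M = 0"
proof -
  define S where "S = {l2_norm (T x) | x. x \<in> M \<and> l2_norm x = 1}"
  have S_nonneg: "\<forall>t\<in>S. 0 \<le> t"
    using assms(1) l2_norm_nonneg unfolding S_def by blast
  have S_small: "Inf S \<le> 1 / (real k + 1)" for k
  proof -
    obtain x where x: "x \<in> M" "l2_norm x = 1" "l2_norm (T x) \<le> 1 / (real k + 1)"
      using assms(2) by blast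
    hence "l2_norm (T x) \<in> S" unfolding S_def by blast
    with S_nonneg x(3) show ?thesis by (meson bdd_belowI cInf_lower order_trans)
  qed
  have "Inf S \<le> 0"
  proof (rule ccontr)
    assume "\<not> Inf S \<le> 0"
    then obtain k where "inverse (real (Suc k)) < Inf S"
      using reals_Archimedean[of "Inf S"] by auto
    with S_small[of k] show False by (simp add: inverse_eq_divide add.commute)
  qed
  moreover have "0 \<le> Inf S"
  proof (rule cInf_greatest)
    show "S \<noteq> {}" using assms(2)[of 0] unfolding S_def by blast
  qed (use S_nonneg in blast)
  ultimately show ?thesis unfolding restr_inf_def S_def[symmetric] by simp
qed

definition odd_proj :: "(nat \<Rightarrow> complex) \<Rightarrow> (nat \<Rightarrow> complex)" where
  "odd_proj x = (\<lambda>n. if odd n then x n else 0)"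

lemma odd_proj_l2:
  assumes "x \<in> l2"
  shows "odd_proj x \<in> l2" and "l2_norm (odd_proj x) \<le> l2_norm x"
proof -
  have x: "summable (\<lambda>n. (cmod (x n))\<^sup>2)" using assms by (simp add: l2_def)
  have le: "(cmod (odd_proj x n))\<^sup>2 \<le> (cmod (x n))\<^sup>2" for n
    by (simp add: odd_proj_def)
  have Px: "summable (\<lambda>n. (cmod (odd_proj x n))\<^sup>2)"
    by (rule summable_comparison_test[OF _ x]) (simp add: le)
  thus "odd_proj x \<in> l2" by (simp add: l2_def)
  show "l2_norm (odd_proj x) \<le> l2_norm x" unfolding l2_norm_def
    by (intro real_sqrt_le_mono suminf_le x Px le)
qed

lemma orth_proj_odd_proj: "orth_proj odd_proj"
  unfolding orth_proj_def bounded_op_def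
proof (intro conjI ballI allI exI)
  fix x assume "x \<in> l2"
  thus "odd_proj x \<in> l2" "l2_norm (odd_proj x) \<le> 1 * l2_norm x"
    using odd_proj_l2 by simp_all
next
  fix x y a show "odd_proj (\<lambda>n. a * x n + y n) = (\<lambda>n. a * odd_proj x n + odd_proj y n)"
    by (auto simp: odd_proj_def)
next
  fix x show "odd_proj (odd_proj x) = odd_proj x" by (auto simp: odd_proj_def)
next
  fix x y show "l2_inner (odd_proj x) y = l2_inner x (odd_proj y)"
    unfolding l2_inner_def odd_proj_def by (rule arg_cong[where f=suminf]) auto
qed

definition slant_subspace :: "(nat \<Rightarrow> complex) set" where
  "slant_subspace = {x \<in> l2. \<forall>j. x (2*j+1) = x (2*j) / of_nat (j+1)}"

lemma closed_subspace_slant: "closed_subspace slant_subspace"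
  unfolding closed_subspace_def
proof (intro conjI ballI allI impI)
  show "slant_subspace \<subseteq> l2" "(\<lambda>n. 0) \<in> slant_subspace"
    by (auto simp: slant_subspace_def l2_def)
next
  fix x y a assume "x \<in> slant_subspace" "y \<in> slant_subspace"
  thus "(\<lambda>n. a * x n + y n) \<in> slant_subspace"
    by (auto simp: slant_subspace_def l2_lin_comb add_divide_distrib)
next
  fix s x
  assume "(\<forall>k. s k \<in> slant_subspace) \<and> x \<in> l2 \<and> (\<lambda>k. l2_norm (\<lambda>n. s k n - x n)) \<longlonglongrightarrow> 0"
  hence s: "\<And>k. s k \<in> slant_subspace" and x: "x \<in> l2"
    and lim: "(\<lambda>k. l2_norm (\<lambda>n. s k n - x n)) \<longlonglongrightarrow> 0" by auto
  have coord: "(\<lambda>k. s k n) \<longlonglongrightarrow> x n" for n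
    using s x lim by (intro l2_tendsto_coordinate) (auto simp: slant_subspace_def)
  have "x (2*j+1) = x (2*j) / of_nat (j+1)" for j
  proof -
    have "(\<lambda>k. s k (2*j) / of_nat (j+1)) \<longlonglongrightarrow> x (2*j) / of_nat (j+1)"
      by (intro tendsto_divide coord tendsto_const) (simp only: of_nat_eq_0_iff; simp)
    moreover have "(\<lambda>k. s k (2*j+1)) = (\<lambda>k. s k (2*j) / of_nat (j+1))"
      using s by (auto simp: slant_subspace_def)
    ultimately show ?thesis using coord LIMSEQ_unique by metis
  qed
  with x show "x \<in> slant_subspace" by (simp add: slant_subspace_def)
qed

lemma slant_odd_proj_eq_0:
  assumes "x \<in> slant_subspace" "odd_proj x = (\<lambda>n. 0)"
  shows "x = (\<lambda>n. 0)"
proof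
  fix n
  have odd0: "x (2*j+1) = 0" for j
    using fun_cong[OF assms(2), of "2*j+1"] by (simp add: odd_proj_def)
  have "x (2*j+1) = x (2*j) / of_nat (j+1)" for j
    using assms(1) by (simp add: slant_subspace_def)
  hence even0: "x (2*j) = 0" for j
    using odd0[of j] by (metis divide_eq_0_iff of_nat_eq_0_iff add_eq_0_iff_both_eq_0 one_neq_zero)
  show "x n = 0"
    by (cases "odd n") (metis oddE odd0, metis evenE even0)
qed

definition pair_vec :: "nat \<Rightarrow> complex \<Rightarrow> complex \<Rightarrow> nat \<Rightarrow> complex" where
  "pair_vec k u v = (\<lambda>n. if n = 2*k then u else if n = 2*k+1 then v else 0)"

lemma pair_vec_l2: "pair_vec k u v \<in> l2"
  and l2_norm_pair_vec: "l2_norm (pair_vec k u v) = sqrt ((cmod u)\<^sup>2 + (cmod v)\<^sup>2)"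
proof -
  have zero: "n \<notin> {2*k, 2*k+1} \<Longrightarrow> (cmod (pair_vec k u v n))\<^sup>2 = 0" for n
    by (simp add: pair_vec_def)
  show "pair_vec k u v \<in> l2"
    unfolding l2_def mem_Collect_eq by (rule summable_finite[of "{2*k, 2*k+1}"]) (auto simp: zero)
  show "l2_norm (pair_vec k u v) = sqrt ((cmod u)\<^sup>2 + (cmod v)\<^sup>2)"
    unfolding l2_norm_def
    by (subst suminf_finite[of "{2*k, 2*k+1}"]) (auto simp: zero pair_vec_def)
qed

lemma odd_proj_pair_vec: "odd_proj (pair_vec k u v) = pair_vec k 0 v"
  by (auto simp: odd_proj_def pair_vec_def fun_eq_iff)

lemma slant_unit_vector:
  "\<exists>x\<in>slant_subspace. l2_norm x = 1 \<and> l2_norm (odd_proj x) \<le> 1 / (real k + 1)"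
proof -
  define d where "d = sqrt ((real k + 1)\<^sup>2 + 1)"
  define x where "x = pair_vec k (of_real ((real k + 1) / d)) (of_real (1 / d))"
  have d_pos: "d > 0" by (simp add: d_def add_pos_nonneg)
  have d_sq: "d\<^sup>2 = (real k + 1)\<^sup>2 + 1" by (simp add: d_def add_pos_nonneg)
  have "x (2*j+1) = x (2*j) / of_nat (j+1)" for j
  proof (cases "j = k")
    case True
    have "complex_of_real ((real k + 1) / d) = of_nat (k+1) * complex_of_real (1 / d)"
      by (simp add: of_real_mult[symmetric] del: of_real_mult)
    hence "complex_of_real ((real k + 1) / d) / of_nat (k+1) = complex_of_real (1 / d)"
      by (metis nonzero_mult_div_cancel_left of_nat_eq_0_iff add_eq_0_iff_both_eq_0 one_neq_zero)
    with True show ?thesis by (simp add: x_def pair_vec_def)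
  next
    case False
    hence "2*j+1 \<noteq> 2*k" "2*j \<noteq> 2*k+1" "2*j+1 \<noteq> 2*k+1" "2*j \<noteq> 2*k" by presburger+
    thus ?thesis by (simp add: x_def pair_vec_def)
  qed
  hence "x \<in> slant_subspace" by (simp add: slant_subspace_def x_def pair_vec_l2)
  moreover have "l2_norm x = 1"
    unfolding x_def l2_norm_pair_vec norm_of_real power2_abs
    using d_pos by (simp add: power_divide add_divide_distrib[symmetric] d_sq[symmetric])
  moreover have "l2_norm (odd_proj x) \<le> 1 / (real k + 1)"
  proof -
    have "real k + 1 \<le> d" unfolding d_def by (rule real_le_rsqrt) simp
    with d_pos show ?thesis
      unfolding x_def odd_proj_pair_vec l2_norm_pair_vec norm_of_real power2_abs
      by (simp add: frac_le)
  qed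
  ultimately show ?thesis by blast
qed

theorem lemma3p2:
  shows "\<exists>P. orth_proj P \<and> \<not> AN_star P"
proof (intro exI conjI)
  show "orth_proj odd_proj" by (rule orth_proj_odd_proj)
  have M_l2: "x \<in> slant_subspace \<Longrightarrow> x \<in> l2" for x
    by (simp add: slant_subspace_def)
  have "slant_subspace \<noteq> {\<lambda>n. 0}"
    using slant_unit_vector[of 0] by force
  moreover have "\<not> N_star odd_proj slant_subspace"
  proof
    assume "N_star odd_proj slant_subspace"
    moreover have "restr_inf odd_proj slant_subspace = 0"
      using M_l2 odd_proj_l2(1) slant_unit_vector by (intro restr_inf_eq_0) auto
    ultimately obtain x where x: "x \<in> slant_subspace" "l2_norm x = 1" "l2_norm (odd_proj x) = 0"
      unfolding N_star_def by auto
    hence "odd_proj x = (\<lambda>n. 0)"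
      using l2_norm_eq_0_iff odd_proj_l2(1) M_l2 by blast
    with x show False using slant_odd_proj_eq_0 by fastforce
  qed
  ultimately show "\<not> AN_star odd_proj"
    unfolding AN_star_def using closed_subspace_slant by blast
qed

end
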